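(* Let $a\geq b>0$, $k\geq 1$, and let $\alpha,\beta,t$ be real numbers with $\alpha+\beta t>0$. Then \[ \frac{ka\gamma-b\gamma}{k}+\frac{b}{k}\ln k + \frac{a-b}{\alpha+\beta t}+a\psi(\alpha+\beta t)-b\psi_k(\alpha+\beta t)\geq 0 . \]
   Context: $\gamma$ denotes the Euler–Mascheroni constant and $\psi(t)=\Gamma'(t)/\Gamma(t)$ is the digamma function for $t>0$, where $\Gamma$ is Euler's Gamma function. For $k>0$ and $t>0$, the $k$-Gamma function is $\Gamma_k(t)=\int_0^\infty e^{-x^k/k}x^{t-1}\,dx$, and $\psi_k(t)=\frac{d}{dt}\ln\Gamma_k(t)=\Gamma_k'(t)/\Gamma_k(t)$. *)

theory Defs
  imports "HOL-Analysis.Analysis"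
begin

definition Gamma_k :: "real \<Rightarrow> real \<Rightarrow> real" where
  "Gamma_k k t = (LBINT x:{0<..}. exp (- (x powr k) / k) * x powr (t - 1))"

definition psi_k :: "real \<Rightarrow> real \<Rightarrow> real" where
  "psi_k k t = deriv (\<lambda>s. ln (Gamma_k k s)) t"

end

theory Submission imports Defs "HOL-Real_Asymp.Real_Asymp" begin

text \<open>The substitution \<open>x = (k u) powr (1/k)\<close> in the integral defining \<open>Gamma_k\<close> gives
  \<open>Gamma_k k s = k powr (s/k - 1) * Gamma (s/k)\<close>, hence \<open>psi_k k s = (ln k + Digamma (s/k)) / k\<close>.
  Put \<open>F y = euler_mascheroni + Digamma (y + 1)\<close>; it is increasing on \<open>[0, \<infinity>)\<close> with \<open>F 0 = 0\<close>.
  By \<open>Digamma (y + 1) = Digamma y + 1/y\<close>, the left-hand side equals \<open>a F x - (b/k) F (x/k)\<close>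
  for \<open>x = \<alpha> + \<beta> t\<close>, which is nonnegative because \<open>0 < b/k \<le> a\<close> and \<open>x/k \<le> x\<close>.\<close>

lemma Gamma_set_integral:
  fixes c :: real
  assumes "c > 0"
  shows "set_integrable lborel {0<..} (\<lambda>u. u powr (c - 1) * exp (- u))"
    and "(LBINT u:{0<..}. u powr (c - 1) * exp (- u)) = Gamma c"
proof -
  have "((\<lambda>t. t powr (c - 1) / exp t) has_integral Gamma c) {0..}"
    using Gamma_integral_real assms .
  hence "((\<lambda>t. if t \<in> {0<..} then t powr (c - 1) / exp t else 0) has_integral Gamma c) {0..}"
    by (rule has_integral_spike [of "{0}", rotated 2]) auto
  hence "((\<lambda>t. t powr (c - 1) / exp t) has_integral Gamma c) {0<..}"
    by (subst (asm) has_integral_restrict) auto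
  hence has_int: "((\<lambda>u. u powr (c - 1) * exp (- u)) has_integral Gamma c) {0<..}"
    by (simp add: exp_minus field_simps)
  have "(\<lambda>u. u powr (c - 1) * exp (- u)) absolutely_integrable_on {0<..}"
    by (rule nonnegative_absolutely_integrable_1) (use has_int in auto)
  moreover have "(\<lambda>x. indicator {0<..} x *\<^sub>R (x powr (c - 1) * exp (- x))) \<in> borel_measurable lborel"
    by measurable
  ultimately show integrable: "set_integrable lborel {0<..} (\<lambda>u. u powr (c - 1) * exp (- u))"
    unfolding set_integrable_def by (simp add: integrable_completion)
  show "(LBINT u:{0<..}. u powr (c - 1) * exp (- u)) = Gamma c"
    using set_borel_integral_eq_integral(2)[OF integrable] has_int by (simp add: integral_unique)
qed

lemma Gamma_k_integrand_substitution:
  fixes k s u :: real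
  assumes k: "k > 0" and u: "u > 0"
  defines "x \<equiv> (k * u) powr (1/k)"
  shows "exp (- (x powr k) / k) * x powr (s - 1) * (k * u) powr (1/k - 1)
           = k powr (s/k - 1) * (u powr (s/k - 1) * exp (- u))"
proof -
  have ku: "k * u > 0" using k u by simp
  have "x powr k = k * u" using ku k by (simp add: x_def powr_powr)
  moreover have "x powr (s - 1) * (k * u) powr (1/k - 1) = (k * u) powr (s/k - 1)"
    using ku by (simp add: x_def powr_powr powr_add[symmetric] diff_divide_distrib)
  ultimately show ?thesis
    using k u by (simp add: powr_mult)
qed

lemma kth_root_substitution_limits:
  fixes k :: real
  assumes k: "k > 0"
  shows "((ereal \<circ> (\<lambda>u. (k * u) powr (1/k)) \<circ> real_of_ereal) \<longlongrightarrow> 0) (at_right 0)"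
    and "((ereal \<circ> (\<lambda>u. (k * u) powr (1/k)) \<circ> real_of_ereal) \<longlongrightarrow> \<infinity>) (at_left \<infinity>)"
proof -
  have "((\<lambda>u. (k * u) powr (1/k)) \<longlongrightarrow> 0) (at_right 0)"
    using k by real_asymp
  thus "((ereal \<circ> (\<lambda>u. (k * u) powr (1/k)) \<circ> real_of_ereal) \<longlongrightarrow> 0) (at_right 0)"
    by (simp add: zero_ereal_def ereal_tendsto_simps o_assoc[symmetric])
  have "filterlim (\<lambda>u. (k * u) powr (1/k)) at_top at_top"
    using k by real_asymp
  thus "((ereal \<circ> (\<lambda>u. (k * u) powr (1/k)) \<circ> real_of_ereal) \<longlongrightarrow> \<infinity>) (at_left \<infinity>)"
    by (simp add: at_left_PInf filterlim_filtermap o_def tendsto_PInfty_eq_at_top)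
qed

lemma Gamma_k_eq_Gamma:
  fixes k s :: real
  assumes k: "k > 0" and s: "s > 0"
  shows "Gamma_k k s = k powr (s/k - 1) * Gamma (s/k)"
proof -
  define f where "f x = exp (- (x powr k) / k) * x powr (s - 1)" for x
  define g where "g = (\<lambda>u. (k * u) powr (1/k))"
  define g' where "g' u = (k * u) powr (1/k - 1)" for u
  define C where "C = k powr (s/k - 1)"
  have sk: "s/k > 0" using s k by simp
  have fg: "f (g u) * g' u = C * (u powr (s/k - 1) * exp (- u))" if "u > 0" for u
    using Gamma_k_integrand_substitution[OF k that] by (simp add: f_def g_def g'_def C_def)
  have pos: "x > 0" if "0 < ereal x" for x
    using that by (simp add: zero_ereal_def)
  have "set_integrable lborel {0<..} (\<lambda>u. C * (u powr (s/k - 1) * exp (- u)))"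
    by (intro set_integrable_mult_right Gamma_set_integral(1) sk)
  also have "?this \<longleftrightarrow> set_integrable lborel {0<..} (\<lambda>u. f (g u) * g' u)"
    by (intro set_integrable_cong) (auto simp: fg)
  finally have integrable: "set_integrable lborel (einterval 0 \<infinity>) (\<lambda>u. f (g u) * g' u)"
    by (simp add: zero_ereal_def)
  have lim_0: "((ereal \<circ> g \<circ> real_of_ereal) \<longlongrightarrow> 0) (at_right 0)"
   and lim_top: "((ereal \<circ> g \<circ> real_of_ereal) \<longlongrightarrow> \<infinity>) (at_left \<infinity>)"
    unfolding g_def using kth_root_substitution_limits[OF k] by simp_all
  have deriv: "(g has_real_derivative g' u) (at u)" if "0 < ereal u" for u
    using k pos[OF that] unfolding g_def g'_def
    by (auto intro!: derivative_eq_intros simp: powr_diff field_simps)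
  have cont_f: "isCont f (g u)" if "0 < ereal u" for u
    using k pos[OF that] unfolding f_def g_def by (auto intro!: continuous_intros)
  have cont_g': "isCont g' u" if "0 < ereal u" for u
    using k pos[OF that] unfolding g'_def by (auto intro!: continuous_intros)
  have "(LBINT x=0..\<infinity>. f x) = (LBINT u=0..\<infinity>. f (g u) * g' u)"
    by (rule interval_integral_substitution_nonneg(2)
          [OF _ deriv cont_f cont_g' _ _ lim_0 lim_top integrable])
       (auto simp: f_def g'_def)
  hence "Gamma_k k s = (LBINT u:{0<..}. f (g u) * g' u)"
    by (simp add: Gamma_k_def f_def interval_lebesgue_integral_def zero_ereal_def)
  also have "\<dots> = (LBINT u:{0<..}. C * (u powr (s/k - 1) * exp (- u)))"
    by (intro set_lebesgue_integral_cong) (auto simp: fg)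
  also have "\<dots> = C * Gamma (s/k)"
    by (simp add: Gamma_set_integral(2)[OF sk])
  finally show ?thesis by (simp add: C_def)
qed

lemma psi_k_eq_Digamma:
  fixes k x :: real
  assumes k: "k > 0" and x: "x > 0"
  shows "psi_k k x = (ln k + Digamma (x/k)) / k"
proof -
  have "eventually (\<lambda>s. s > 0) (nhds x)"
    using x by (intro eventually_nhds_in_open[of "{0<..}", simplified]) auto
  hence log_Gamma_k_eq:
    "eventually (\<lambda>s. (s/k - 1) * ln k + ln_Gamma (s/k) = ln (Gamma_k k s)) (nhds x)"
  proof (rule eventually_mono)
    fix s :: real assume s: "s > 0"
    hence "Gamma (s/k) > 0" using k by (intro Gamma_real_pos) simp
    thus "(s/k - 1) * ln k + ln_Gamma (s/k) = ln (Gamma_k k s)"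
      using s k less_imp_neq[of 0 "Gamma (s/k)"]
      by (simp add: Gamma_k_eq_Gamma ln_mult ln_powr ln_Gamma_real_pos)
  qed
  have "((\<lambda>s. (s/k - 1) * ln k + ln_Gamma (s/k)) has_real_derivative
          (1/k) * ln k + Digamma (x/k) * (1/k)) (at x)"
    using k x by (auto intro!: derivative_eq_intros)
  hence "((\<lambda>s. ln (Gamma_k k s)) has_real_derivative
          (1/k) * ln k + Digamma (x/k) * (1/k)) (at x)"
    by (rule DERIV_cong_ev[OF refl log_Gamma_k_eq refl, THEN iffD1])
  hence "psi_k k x = (1/k) * ln k + Digamma (x/k) * (1/k)"
    unfolding psi_k_def by (rule DERIV_imp_deriv)
  thus ?thesis by (simp add: add_divide_distrib)
qed

lemma euler_mascheroni_plus_Digamma_plus1_nonneg: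
  fixes y :: real
  assumes "y \<ge> 0"
  shows "euler_mascheroni + Digamma (y + 1) \<ge> 0"
  using Digamma_real_mono[of 1 "y + 1"] assms by simp

lemma euler_mascheroni_plus_Digamma_plus1_weighted_mono:
  fixes a c x y :: real
  assumes "0 \<le> c" "c \<le> a" "0 \<le> y" "y \<le> x"
  shows "c * (euler_mascheroni + Digamma (y + 1)) \<le> a * (euler_mascheroni + Digamma (x + 1))"
proof -
  have "Digamma (y + 1) \<le> Digamma (x + 1)"
    using assms by (intro Digamma_real_mono) auto
  moreover have "euler_mascheroni + Digamma (y + 1) \<ge> 0"
    using assms(3) by (rule euler_mascheroni_plus_Digamma_plus1_nonneg)
  ultimately show ?thesis
    using assms by (intro mult_mono) auto
qed

theorem lemma3p6:
  fixes a b k \<alpha> \<beta> t :: real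
  assumes "a \<ge> b" "b > 0" "k \<ge> 1" "\<alpha> + \<beta> * t > 0"
  shows "(k * a * euler_mascheroni - b * euler_mascheroni) / k + b / k * ln k
           + (a - b) / (\<alpha> + \<beta> * t) + a * Digamma (\<alpha> + \<beta> * t)
           - b * psi_k k (\<alpha> + \<beta> * t) \<ge> 0"
proof -
  define x where "x = \<alpha> + \<beta> * t"
  have x: "x > 0" and k: "k > 0" using assms by (auto simp: x_def)
  have "b / k \<le> b" using assms by (simp add: divide_le_eq mult_le_cancel_left1)
  moreover have "x / k \<le> x" using x assms(3) by (simp add: divide_le_eq)
  ultimately have weighted: "b / k * (euler_mascheroni + Digamma (x/k + 1))
                               \<le> a * (euler_mascheroni + Digamma (x + 1))"
    using assms x k by (intro euler_mascheroni_plus_Digamma_plus1_weighted_mono) auto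
  have "Digamma (x + 1) = Digamma x + 1 / x" "Digamma (x/k + 1) = Digamma (x/k) + k / x"
    using x k by (simp_all add: Digamma_plus1)
  hence "(k * a * euler_mascheroni - b * euler_mascheroni) / k + b / k * ln k
           + (a - b) / x + a * Digamma x - b * psi_k k x
         = a * (euler_mascheroni + Digamma (x + 1)) - b / k * (euler_mascheroni + Digamma (x/k + 1))"
    using k x by (simp add: psi_k_eq_Digamma field_simps)
  with weighted show ?thesis by (simp add: x_def)
qed

end
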